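(* Consider the finite game with players $\mathcal{M}=\{1,\dots,M\}$, common action set $\mathcal{N}$ and costs $c_i(\mathbf{a}) = \frac{\sigma^2}{h_{ia_i}}\,\frac{\beta_i}{[1-\sum_{l\in\mathcal{M}_{a_i}(\mathbf{a})}\beta_l]^+}$. If this game contains no best response cycles, then the algorithm MAPC$^\ast$, started from any initial association profile, converges in a finite number of steps (i.e., after finitely many steps the association profile no longer changes).
   Context: Uplink cellular model: mobiles $\mathcal{M}=\{1,\dots,M\}$, BSs $\mathcal{N}=\{1,\dots,N\}$, power gains $h_{ij}>0$, noise power $\sigma^2>0$, target SINRs $\gamma_i>0$, $\beta_i=\gamma_i/(1+\gamma_i)$. Association profile $\mathbf{a}\in\mathcal{N}^M$, $\mathcal{M}_j(\mathbf{a})=\{l: a_l=j\}$, $[x]^+=\max(x,0)$, positive$/0=+\infty$; $(b,\mathbf{a}_{-i})$ replaces $a_i$ by $b$. A best response path is a sequence of profiles $\mathbf{a}^1,\dots,\mathbf{a}^k$ where each $\mathbf{a}^{r+1}=(b,\mathbf{a}^r_{-i})$ for some player $i$ and some $b\in\arg\min_{b'\in\mathcal{N}}c_i(b',\mathbf{a}^r_{-i})$; a best response cycle is such a path with $\mathbf{a}^1=\mathbf{a}^k$ in which, for at least one step, the deviating player strictly decreases its cost. Algorithm MAPC$^\ast$: at times $t=0,1,2,\dots$, mobile $i=1+(t\bmod M)$ changes its association at $t+1$ iff $a_i(t)\notin\arg\min_{j\in\mathcal{N}}\big(c_i(j,\mathbf{a}(t)_{-i}),\ \sum_{l\in\mathcal{M}_j((j,\mathbf{a}(t)_{-i}))}\beta_l\big)$,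 the minimization being with respect to lexicographic order on pairs; in that case $a_i(t+1)$ is chosen in this lexicographic argmin and all other associations are unchanged. *)

theory Defs
  imports Complex_Main "HOL-Library.FuncSet" "HOL-Library.Extended_Real"
begin

text \<open>Mobiles are 1..M, base stations 1..N. An association profile is an
extensional function in PiE {1..M} (\<lambda>_. {1..N}).
h i j is the power gain, sigma2 the noise power sigma^2, gamma i the target SINR.\<close>

definition beta :: "(nat \<Rightarrow> real) \<Rightarrow> nat \<Rightarrow> real" where
  "beta gamma i = gamma i / (1 + gamma i)"

definition profiles :: "nat \<Rightarrow> nat \<Rightarrow> (nat \<Rightarrow> nat) set" where
  "profiles M N = PiE {1..M} (\<lambda>_. {1..N})"

definition assoc :: "nat \<Rightarrow> (nat \<Rightarrow> nat) \<Rightarrow> nat \<Rightarrow> nat set" where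
  "assoc M a j = {l \<in> {1..M}. a l = j}"

definition load :: "nat \<Rightarrow> (nat \<Rightarrow> real) \<Rightarrow> (nat \<Rightarrow> nat) \<Rightarrow> nat \<Rightarrow> real" where
  "load M gamma a j = (\<Sum>l\<in>assoc M a j. beta gamma l)"

definition cost :: "nat \<Rightarrow> real \<Rightarrow> (nat \<Rightarrow> nat \<Rightarrow> real) \<Rightarrow> (nat \<Rightarrow> real)
                      \<Rightarrow> nat \<Rightarrow> (nat \<Rightarrow> nat) \<Rightarrow> ereal" where
  "cost M sigma2 h gamma i a =
     (let d = max (1 - load M gamma a (a i)) 0 in
      if d > 0 then ereal (sigma2 / h i (a i) * beta gamma i / d) else \<infinity>)"

definition best_response ::
  "nat \<Rightarrow> nat \<Rightarrow> real \<Rightarrow> (nat \<Rightarrow> nat \<Rightarrow> real) \<Rightarrow> (nat \<Rightarrow> real)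
     \<Rightarrow> nat \<Rightarrow> (nat \<Rightarrow> nat) \<Rightarrow> nat \<Rightarrow> bool" where
  "best_response M N sigma2 h gamma i a b \<longleftrightarrow>
     b \<in> {1..N} \<and>
     (\<forall>b'\<in>{1..N}. cost M sigma2 h gamma i (a(i := b)) \<le> cost M sigma2 h gamma i (a(i := b')))"

definition br_step ::
  "nat \<Rightarrow> nat \<Rightarrow> real \<Rightarrow> (nat \<Rightarrow> nat \<Rightarrow> real) \<Rightarrow> (nat \<Rightarrow> real)
     \<Rightarrow> nat \<Rightarrow> (nat \<Rightarrow> nat) \<Rightarrow> (nat \<Rightarrow> nat) \<Rightarrow> bool" where
  "br_step M N sigma2 h gamma i a a' \<longleftrightarrow>
     i \<in> {1..M} \<and> (\<exists>b. best_response M N sigma2 h gamma i a b \<and> a' = a(i := b))"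

definition has_br_cycle ::
  "nat \<Rightarrow> nat \<Rightarrow> real \<Rightarrow> (nat \<Rightarrow> nat \<Rightarrow> real) \<Rightarrow> (nat \<Rightarrow> real) \<Rightarrow> bool" where
  "has_br_cycle M N sigma2 h gamma \<longleftrightarrow>
     (\<exists>(p :: nat \<Rightarrow> nat \<Rightarrow> nat) (k::nat) (pl :: nat \<Rightarrow> nat).
        k \<ge> 1 \<and> p 0 \<in> profiles M N \<and> p k = p 0 \<and>
        (\<forall>r<k. br_step M N sigma2 h gamma (pl r) (p r) (p (Suc r))) \<and>
        (\<exists>r<k. cost M sigma2 h gamma (pl r) (p (Suc r)) < cost M sigma2 h gamma (pl r) (p r)))"

definition lex_le :: "ereal \<times> real \<Rightarrow> ereal \<times> real \<Rightarrow> bool" where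
  "lex_le x y \<longleftrightarrow> fst x < fst y \<or> (fst x = fst y \<and> snd x \<le> snd y)"

definition mapc_key ::
  "nat \<Rightarrow> real \<Rightarrow> (nat \<Rightarrow> nat \<Rightarrow> real) \<Rightarrow> (nat \<Rightarrow> real)
     \<Rightarrow> nat \<Rightarrow> (nat \<Rightarrow> nat) \<Rightarrow> nat \<Rightarrow> ereal \<times> real" where
  "mapc_key M sigma2 h gamma i a j =
     (cost M sigma2 h gamma i (a(i := j)), load M gamma (a(i := j)) j)"

definition lex_argmin ::
  "nat \<Rightarrow> nat \<Rightarrow> real \<Rightarrow> (nat \<Rightarrow> nat \<Rightarrow> real) \<Rightarrow> (nat \<Rightarrow> real)
     \<Rightarrow> nat \<Rightarrow> (nat \<Rightarrow> nat) \<Rightarrow> nat set" where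
  "lex_argmin M N sigma2 h gamma i a =
     {j \<in> {1..N}. \<forall>j'\<in>{1..N}. lex_le (mapc_key M sigma2 h gamma i a j)
                                      (mapc_key M sigma2 h gamma i a j')}"

definition mapc_run ::
  "nat \<Rightarrow> nat \<Rightarrow> real \<Rightarrow> (nat \<Rightarrow> nat \<Rightarrow> real) \<Rightarrow> (nat \<Rightarrow> real)
     \<Rightarrow> (nat \<Rightarrow> nat \<Rightarrow> nat) \<Rightarrow> bool" where
  "mapc_run M N sigma2 h gamma a \<longleftrightarrow>
     a 0 \<in> profiles M N \<and>
     (\<forall>t. let i = 1 + t mod M in
        (if a t i \<in> lex_argmin M N sigma2 h gamma i (a t) then a (Suc t) = a t
         else (\<exists>b\<in>lex_argmin M N sigma2 h gamma i (a t). a (Suc t) = (a t)(i := b))))"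

end

theory Submission
  imports Defs
begin

text \<open>Every MAPC* move is a best response. A move that does not lower the mover's
cost must, by the lexicographic tie-break, strictly lower the load the mover joins
below the load it leaves, and this strictly lowers the potential \<open>\<Sum>\<^sub>j load\<^sub>j\<^sup>2\<close>.
Profiles are finitely many, so a run that never stabilises revisits some profile
after a genuine move. If some move in between lowered a cost, that stretch of the run
is a best response cycle; otherwise the potential strictly decreases around a loop.\<close>

lemma finite_range_not_eventually_constE:
  fixes x :: "nat \<Rightarrow> 'a"
  assumes "finite (range x)" and "\<not> (\<exists>T. \<forall>t\<ge>T. x t = x T)"
  obtains t1 s t2 where "t1 \<le> s" "s < t2" "x t2 = x t1" "x (Suc s) \<noteq> x s"
proof -
  have moves: "\<exists>s\<ge>T. x (Suc s) \<noteq> x s" for T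
  proof (rule ccontr)
    assume "\<not> (\<exists>s\<ge>T. x (Suc s) \<noteq> x s)"
    then have "x (T + n) = x T" for n by (induction n) auto
    then have "\<forall>t\<ge>T. x t = x T" by (metis le_add_diff_inverse)
    with assms(2) show False by blast
  qed
  obtain p where "infinite (x -` {p})"
    using inf_img_fin_domE'[OF assms(1)] by blast
  then have inf: "infinite {t. x t = p}" by (simp add: vimage_def)
  then obtain t1 where t1: "x t1 = p" by (metis (mono_tags) empty_Collect_eq finite.emptyI)
  obtain s where s: "t1 \<le> s" "x (Suc s) \<noteq> x s" using moves by blast
  obtain t2 where "s < t2" "x t2 = p" using inf unfolding infinite_nat_iff_unbounded by blast
  with that s t1 show thesis by simp
qed

lemma antimono_on_interval:
  fixes f :: "nat \<Rightarrow> 'a :: preorder"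
  assumes "\<And>t. m \<le> t \<Longrightarrow> t < n \<Longrightarrow> f (Suc t) \<le> f t" and "m \<le> n"
  shows "f n \<le> f m"
  using assms(2,1)
proof (induction n rule: dec_induct)
  case (step n)
  then show ?case by (meson less_Suc_eq order_trans)
qed simp

lemma has_br_cycleI:
  assumes "t1 < t2" "p t1 \<in> profiles M N" "p t2 = p t1"
    and "\<And>r. t1 \<le> r \<Longrightarrow> r < t2 \<Longrightarrow> br_step M N sigma2 h gamma (pl r) (p r) (p (Suc r))"
    and "t1 \<le> r" "r < t2"
    and "cost M sigma2 h gamma (pl r) (p (Suc r)) < cost M sigma2 h gamma (pl r) (p r)"
  shows "has_br_cycle M N sigma2 h gamma"
  unfolding has_br_cycle_def
proof (rule exI[of _ "\<lambda>q. p (t1 + q)"], rule exI[of _ "t2 - t1"],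
       rule exI[of _ "\<lambda>q. pl (t1 + q)"], intro conjI)
  show "\<forall>q<t2 - t1. br_step M N sigma2 h gamma (pl (t1 + q)) (p (t1 + q)) (p (t1 + Suc q))"
    using assms(4) by simp
  show "\<exists>q<t2 - t1. cost M sigma2 h gamma (pl (t1 + q)) (p (t1 + Suc q))
                     < cost M sigma2 h gamma (pl (t1 + q)) (p (t1 + q))"
    using assms(5-7) by (intro exI[of _ "r - t1"]) auto
qed (use assms(1-3) in auto)

lemma profiles_fun_upd:
  assumes "a \<in> profiles M N" "i \<in> {1..M}" "b \<in> {1..N}"
  shows "a(i := b) \<in> profiles M N"
  using assms PiE_fun_upd[of b "\<lambda>_. {1..N}" i a "{1..M}"]
  by (simp add: profiles_def insert_absorb)

lemma load_fun_upd:
  assumes "i \<in> {1..M}" "a i = c" "c \<noteq> b"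
  shows "load M gamma (a(i := b)) j = load M gamma a j
     + (if j = b then beta gamma i else 0) - (if j = c then beta gamma i else 0)"
proof -
  have fin: "finite (assoc M a j)" by (simp add: assoc_def)
  consider "j = b" | "j = c" | "j \<noteq> b" "j \<noteq> c" by blast
  then show ?thesis
  proof cases
    case 1
    then have "assoc M (a(i := b)) j = insert i (assoc M a j)" "i \<notin> assoc M a j"
      using assms by (auto simp: assoc_def)
    with 1 fin assms show ?thesis by (simp add: load_def)
  next
    case 2
    then have leave: "assoc M (a(i := b)) j = assoc M a j - {i}" "i \<in> assoc M a j"
      using assms by (auto simp: assoc_def)
    have "load M gamma a j = beta gamma i + load M gamma (a(i := b)) j"
      unfolding load_def leave(1) using sum.remove[OF fin leave(2)] by simp
    with 2 assms show ?thesis by simp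
  next
    case 3
    then have "assoc M (a(i := b)) j = assoc M a j"
      using assms by (auto simp: assoc_def)
    with 3 show ?thesis by (simp add: load_def)
  qed
qed

definition load_potential :: "nat \<Rightarrow> nat \<Rightarrow> (nat \<Rightarrow> real) \<Rightarrow> (nat \<Rightarrow> nat) \<Rightarrow> real" where
  "load_potential M N gamma a = (\<Sum>j\<in>{1..N}. (load M gamma a j)\<^sup>2)"

lemma load_potential_fun_upd:
  assumes "i \<in> {1..M}" "a i = c" "c \<noteq> b" "b \<in> {1..N}" "c \<in> {1..N}"
  shows "load_potential M N gamma (a(i := b)) = load_potential M N gamma a
           + 2 * beta gamma i * (load M gamma (a(i := b)) b - load M gamma a c)"
proof -
  define g where "g j = (load M gamma (a(i := b)) j)\<^sup>2 - (load M gamma a j)\<^sup>2" for j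
  note upd = load_fun_upd[where a = a and c = c and b = b, OF assms(1-3)]
  have "load_potential M N gamma (a(i := b)) - load_potential M N gamma a = (\<Sum>j\<in>{1..N}. g j)"
    by (simp add: load_potential_def g_def sum_subtractf)
  also have "\<dots> = (\<Sum>j\<in>{b, c}. g j)"
    by (rule sum.mono_neutral_right) (use assms in \<open>auto simp: g_def upd\<close>)
  also have "\<dots> = g b + g c" using assms by simp
  also have "\<dots> = 2 * beta gamma i * (load M gamma (a(i := b)) b - load M gamma a c)"
    using assms by (simp add: g_def upd power2_eq_square algebra_simps)
  finally show ?thesis by simp
qed

lemma lex_argmin_best_response:
  assumes "b \<in> lex_argmin M N sigma2 h gamma i a"
  shows "best_response M N sigma2 h gamma i a b"
  using assms unfolding lex_argmin_def best_response_def lex_le_def mapc_key_def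
  by (auto simp: order_le_less)

text \<open>The step from \<open>a\<close> to a lexicographic minimiser \<open>b\<close> cannot tie the old key,
since the old key is not minimal while \<open>b\<close>'s is.\<close>

lemma lex_argmin_move_improves:
  assumes "i \<in> {1..M}" "a i \<in> {1..N}" "gamma i > 0"
    and b: "b \<in> lex_argmin M N sigma2 h gamma i a"
    and not_min: "a i \<notin> lex_argmin M N sigma2 h gamma i a"
  shows "cost M sigma2 h gamma i (a(i := b)) < cost M sigma2 h gamma i a
       \<or> load_potential M N gamma (a(i := b)) < load_potential M N gamma a"
proof -
  define K where "K = mapc_key M sigma2 h gamma i a"
  have bN: "b \<in> {1..N}" using b by (simp add: lex_argmin_def)
  have Kb: "K b = (cost M sigma2 h gamma i (a(i := b)), load M gamma (a(i := b)) b)"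
    by (simp add: K_def mapc_key_def)
  have Kc: "K (a i) = (cost M sigma2 h gamma i a, load M gamma a (a i))"
    by (simp add: K_def mapc_key_def)
  have le: "lex_le (K b) (K (a i))"
    using b assms(2) unfolding lex_argmin_def K_def by blast
  obtain j where "j \<in> {1..N}" "\<not> lex_le (K (a i)) (K j)"
    using not_min assms(2) unfolding lex_argmin_def K_def by blast
  moreover have "lex_le (K b) (K j)" using b calculation(1) unfolding lex_argmin_def K_def by blast
  ultimately have neq: "K b \<noteq> K (a i)" by auto
  show ?thesis
  proof (cases "cost M sigma2 h gamma i (a(i := b)) < cost M sigma2 h gamma i a")
    case False
    with le neq Kb Kc have "load M gamma (a(i := b)) b < load M gamma a (a i)" "a i \<noteq> b"
      by (auto simp: lex_le_def)
    moreover have "beta gamma i > 0" using assms(3) by (simp add: beta_def)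
    ultimately show ?thesis
      using load_potential_fun_upd[where a = a and c = "a i" and b = b, OF assms(1) refl _ bN assms(2)] by (simp add: mult_pos_neg)
  qed simp
qed

lemma mapc_run_stepE:
  assumes "mapc_run M N sigma2 h gamma a" "i = 1 + t mod M"
  obtains "a (Suc t) = a t"
  | b where "b \<in> lex_argmin M N sigma2 h gamma i (a t)"
      "a t i \<notin> lex_argmin M N sigma2 h gamma i (a t)" "a (Suc t) = (a t)(i := b)"
  using assms unfolding mapc_run_def Let_def by (metis (full_types))

lemma mapc_run_profiles:
  assumes "M \<ge> 1" "mapc_run M N sigma2 h gamma a"
  shows "a t \<in> profiles M N"
proof (induction t)
  case 0
  then show ?case using assms(2) by (simp add: mapc_run_def)
next
  case (Suc t)
  have "1 + t mod M \<in> {1..M}" using assms(1) by (simp add: Suc_leI)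
  with Suc show ?case
  proof (cases rule: mapc_run_stepE[OF assms(2) refl, of t])
    case (2 b)
    then have "b \<in> {1..N}" by (simp add: lex_argmin_def)
    with Suc \<open>1 + t mod M \<in> {1..M}\<close> show ?thesis
      unfolding 2(3) by (rule profiles_fun_upd)
  qed simp
qed

lemma mapc_run_br_step:
  assumes "M \<ge> 1" "mapc_run M N sigma2 h gamma a"
  shows "br_step M N sigma2 h gamma (1 + t mod M) (a t) (a (Suc t))"
proof -
  define i where "i = 1 + t mod M"
  have i: "i \<in> {1..M}" using assms(1) by (simp add: i_def Suc_leI)
  show ?thesis
  proof (cases rule: mapc_run_stepE[OF assms(2) i_def])
    case 1
    have "a t i \<in> lex_argmin M N sigma2 h gamma i (a t)"
      using assms(2) 1 unfolding mapc_run_def Let_def i_def by (metis fun_upd_same)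
    with 1 i show ?thesis
      unfolding br_step_def i_def[symmetric]
      by (intro conjI exI[of _ "a t i"]) (auto dest: lex_argmin_best_response)
  next
    case 2
    with i show ?thesis
      unfolding br_step_def i_def[symmetric] by (blast dest: lex_argmin_best_response)
  qed
qed

lemma mapc_run_descent:
  assumes "M \<ge> 1" "mapc_run M N sigma2 h gamma a"
    and "\<And>i. i \<in> {1..M} \<Longrightarrow> gamma i > 0"
    and "i = 1 + t mod M"
  shows "a (Suc t) = a t
       \<or> cost M sigma2 h gamma i (a (Suc t)) < cost M sigma2 h gamma i (a t)
       \<or> load_potential M N gamma (a (Suc t)) < load_potential M N gamma (a t)"
proof -
  have i: "i \<in> {1..M}" using assms(1,4) by (simp add: Suc_leI)
  then have "a t i \<in> {1..N}"
    using mapc_run_profiles[OF assms(1,2), of t] by (auto simp: profiles_def)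
  then show ?thesis
  proof (cases rule: mapc_run_stepE[OF assms(2,4)])
    case (2 b)
    then show ?thesis
      using lex_argmin_move_improves[where a = "a t", OF i \<open>a t i \<in> {1..N}\<close> assms(3)[OF i] 2(1,2)]
        2(3) by simp
  qed simp
qed

theorem proposition3:
  fixes M N :: nat and sigma2 :: real and h :: "nat \<Rightarrow> nat \<Rightarrow> real"
    and gamma :: "nat \<Rightarrow> real" and a :: "nat \<Rightarrow> nat \<Rightarrow> nat"
  assumes "M \<ge> 1" and "N \<ge> 1"
    and "sigma2 > 0"
    and "\<And>i j. i \<in> {1..M} \<Longrightarrow> j \<in> {1..N} \<Longrightarrow> h i j > 0"
    and "\<And>i. i \<in> {1..M} \<Longrightarrow> gamma i > 0"
    and "\<not> has_br_cycle M N sigma2 h gamma"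
    and "mapc_run M N sigma2 h gamma a"
  shows "\<exists>T. \<forall>t\<ge>T. a t = a T"
proof (rule ccontr)
  assume "\<not> ?thesis"
  moreover have "finite (range a)"
    using mapc_run_profiles[OF assms(1,7)] finite_subset[of "range a" "profiles M N"]
    by (auto simp: profiles_def finite_PiE)
  ultimately obtain t1 s t2 where s: "t1 \<le> s" "s < t2" "a t2 = a t1" "a (Suc s) \<noteq> a s"
    using finite_range_not_eventually_constE by blast
  let ?pot = "\<lambda>t. load_potential M N gamma (a t)"
  have no_cost_drop: "\<not> cost M sigma2 h gamma (1 + r mod M) (a (Suc r))
                           < cost M sigma2 h gamma (1 + r mod M) (a r)"
    if "t1 \<le> r" "r < t2" for r
    using has_br_cycleI[OF _ mapc_run_profiles[OF assms(1,7)] s(3)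
                           mapc_run_br_step[OF assms(1,7)] that] s assms(6)
    by fastforce
  have descent: "?pot (Suc r) < ?pot r \<or> a (Suc r) = a r" if "t1 \<le> r" "r < t2" for r
    using mapc_run_descent[OF assms(1,7,5) refl, of r] no_cost_drop[OF that] by blast
  then have "?pot (Suc r) \<le> ?pot r" if "t1 \<le> r" "r < t2" for r
    using that by fastforce
  then have "?pot t2 \<le> ?pot (Suc s)" "?pot s \<le> ?pot t1"
    using antimono_on_interval[of "Suc s" t2 ?pot] antimono_on_interval[of t1 s ?pot] s by auto
  moreover have "?pot (Suc s) < ?pot s" using descent[of s] s by auto
  ultimately show False using s(3) by simp
qed

end
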